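(* Let $f\in\ell^2(V,w)$ be nonnegative and not identically zero with $\mathrm{vol}(\mathrm{supp}(f))\le\mathrm{vol}(V)/2$, and let $a>b\ge0$ and $I=(b,a]$. If $\phi(f)\,\mathrm{vol}_f(a)+\mathrm{vol}_f(I)>0$, then $$\mathcal E_f(I)\ge\frac{\phi(f)^2\,\mathrm{vol}_f(a)^2\,\mathrm{len}(I)^2}{\phi(f)\,\mathrm{vol}_f(a)+\mathrm{vol}_f(I)}.$$
   Context: $G=(V,E,w)$ finite undirected, positive edge weights, $w(v)=\sum_{u\sim v}w(u,v)\ge1$, $\mathrm{vol}(S)=\sum_{v\in S}w(v)$, $\mathrm{supp}(f)=\{v:f(v)\ne0\}$. Conductance $\phi(S)=w(E(S,\overline S))/\min\{\mathrm{vol}(S),\mathrm{vol}(\overline S)\}$ for $\emptyset\ne S\subsetneq V$; $V_f(t)=\{v:f(v)\ge t\}$; $\phi(f)=\min\{\phi(V_f(t)):\emptyset\ne V_f(t)\ne V\}$. For reals $t_1,t_2$, $[t_1,t_2]$ denotes the half-open interval $(\min\{t_1,t_2\},\max\{t_1,t_2\}]$, and $\mathrm{len}$ denotes length. $\mathrm{vol}_f(a)=\mathrm{vol}(\{v:f(v)\ge a\})$ and, for an interval $I$, $\mathrm{vol}_f(I)=\mathrm{vol}(\{v:f(v)\in I\})$. The energy of $f$ restricted to $I$ is $\mathcal E_f(I)=\sum_{\{u,v\}\in E}w(u,v)\,\mathrm{len}(I\cap[f(u),f(v)])^2$. *)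

theory Defs
  imports "HOL-Analysis.Analysis"
begin

text \<open>Weighted graph on finite vertex set V, symmetric weight function w
  (w u v > 0 iff {u,v} is an edge, w u v = 0 otherwise), no loops.\<close>

definition wgraph :: "'a set \<Rightarrow> ('a \<Rightarrow> 'a \<Rightarrow> real) \<Rightarrow> bool" where
  "wgraph V w \<longleftrightarrow> finite V \<and> (\<forall>u v. w u v = w v u) \<and> (\<forall>u v. w u v \<ge> 0)
     \<and> (\<forall>u. w u u = 0) \<and> (\<forall>u v. w u v \<noteq> 0 \<longrightarrow> u \<in> V \<and> v \<in> V)"

definition degw :: "'a set \<Rightarrow> ('a \<Rightarrow> 'a \<Rightarrow> real) \<Rightarrow> 'a \<Rightarrow> real" where
  "degw V w v = (\<Sum>u\<in>V. w u v)"

definition vol :: "'a set \<Rightarrow> ('a \<Rightarrow> 'a \<Rightarrow> real) \<Rightarrow> 'a set \<Rightarrow> real" where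
  "vol V w S = (\<Sum>v\<in>S. degw V w v)"

definition supp :: "'a set \<Rightarrow> ('a \<Rightarrow> real) \<Rightarrow> 'a set" where
  "supp V f = {v\<in>V. f v \<noteq> 0}"

definition cut :: "'a set \<Rightarrow> ('a \<Rightarrow> 'a \<Rightarrow> real) \<Rightarrow> 'a set \<Rightarrow> real" where
  "cut V w S = (\<Sum>u\<in>S. \<Sum>v\<in>V - S. w u v)"

definition conductance :: "'a set \<Rightarrow> ('a \<Rightarrow> 'a \<Rightarrow> real) \<Rightarrow> 'a set \<Rightarrow> real" where
  "conductance V w S = cut V w S / min (vol V w S) (vol V w (V - S))"

definition level_set :: "'a set \<Rightarrow> ('a \<Rightarrow> real) \<Rightarrow> real \<Rightarrow> 'a set" where
  "level_set V f t = {v\<in>V. f v \<ge> t}"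

text \<open>phi(f): minimum over nontrivial level sets (finitely many distinct ones).\<close>
definition phi_fun :: "'a set \<Rightarrow> ('a \<Rightarrow> 'a \<Rightarrow> real) \<Rightarrow> ('a \<Rightarrow> real) \<Rightarrow> real" where
  "phi_fun V w f = Min {conductance V w (level_set V f t) | t.
       level_set V f t \<noteq> {} \<and> level_set V f t \<noteq> V}"

definition vol_ge :: "'a set \<Rightarrow> ('a \<Rightarrow> 'a \<Rightarrow> real) \<Rightarrow> ('a \<Rightarrow> real) \<Rightarrow> real \<Rightarrow> real" where
  "vol_ge V w f a = vol V w {v\<in>V. f v \<ge> a}"

definition vol_int :: "'a set \<Rightarrow> ('a \<Rightarrow> 'a \<Rightarrow> real) \<Rightarrow> ('a \<Rightarrow> real) \<Rightarrow> real set \<Rightarrow> real" where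
  "vol_int V w f I = vol V w {v\<in>V. f v \<in> I}"

definition len_inter :: "real \<Rightarrow> real \<Rightarrow> real \<Rightarrow> real \<Rightarrow> real" where
  "len_inter b1 a1 b2 a2 = max 0 (min a1 a2 - max b1 b2)"

text \<open>Energy restricted to I = (b,a]; each unordered edge counted once (factor 1/2
  over ordered pairs, loops have weight 0).\<close>
definition energy :: "'a set \<Rightarrow> ('a \<Rightarrow> 'a \<Rightarrow> real) \<Rightarrow> ('a \<Rightarrow> real) \<Rightarrow> real \<Rightarrow> real \<Rightarrow> real" where
  "energy V w f b a = (1/2) * (\<Sum>u\<in>V. \<Sum>v\<in>V. w u v *
       (len_inter b a (min (f u) (f v)) (max (f u) (f v)))\<^sup>2)"

end

theory Submission
  imports Defs
begin

text \<open>For every level \<open>t \<in> I\<close> the edges crossing \<open>t\<close> form the cut of the level set \<open>V_f(t)\<close>,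
  of weight at least \<open>\<phi>(f) vol(V_f(t)) \<ge> \<phi>(f) vol_f(a)\<close>. Integrating over \<open>t \<in> I\<close> (co-area) shows
  that the weighted total length \<open>\<Sum> w(u,v) len(I \<inter> [f u, f v])\<close> is at least
  \<open>\<phi>(f) vol_f(a) len(I)\<close>. Edges with an endpoint in \<open>I\<close> have total weight at most \<open>vol_f(I)\<close>, so by
  Cauchy-Schwarz their share of the length is at most \<open>sqrt(\<E>_f(I) vol_f(I))\<close>; every other edge either
  misses \<open>I\<close> or jumps over all of it, contributing \<open>len(I)\<close> times its length to \<open>\<E>_f(I)\<close>.
  Balancing the two contributions gives the bound.\<close>

lemma len_inter_nonneg: "0 \<le> len_inter b a m M"
  by (simp add: len_inter_def)

lemma len_inter_split:
  assumes "b \<le> c" "c \<le> a" "m \<le> M"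
  shows "len_inter b a m M = len_inter b c m M + len_inter c a m M"
  using assms unfolding len_inter_def by (auto simp: max_def min_def)

lemma len_inter_no_endpoint_inside:
  assumes "b < a" "m \<le> M" "m \<notin> {b<..<a}" "M \<notin> {b<..<a}"
  shows "len_inter b a m M = (if m < a \<and> a \<le> M then a - b else 0)"
  using assms unfolding len_inter_def by (auto simp: max_def min_def)

lemma len_inter_sq_no_endpoint_inside:
  assumes "b < a" "m \<le> M" "m \<notin> {b<..a}" "M \<notin> {b<..a}"
  shows "(len_inter b a m M)\<^sup>2 = (a - b) * len_inter b a m M"
  using assms unfolding len_inter_def by (auto simp: max_def min_def power2_eq_square)

text \<open>Induction on the number of interval endpoints inside \<open>(b, a)\<close>: split at one of them; when
  there is none, every interval \<open>(m e, M e]\<close> either contains \<open>(b, a]\<close> or misses it.\<close>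
lemma coarea_lower_bound:
  fixes E :: "'e set" and c m M :: "'e \<Rightarrow> real"
  assumes fin: "finite E" and c: "\<forall>e\<in>E. 0 \<le> c e" and mM: "\<forall>e\<in>E. m e \<le> M e"
    and "b \<le> a"
    and "\<forall>t\<in>{b<..a}. K \<le> (\<Sum>e\<in>E. if m e < t \<and> t \<le> M e then c e else 0)"
  shows "K * (a - b) \<le> (\<Sum>e\<in>E. c e * len_inter b a (m e) (M e))"
  using assms(4,5)
proof (induction "card ((m`E \<union> M`E) \<inter> {b<..<a})" arbitrary: b a rule: less_induct)
  case less
  define P where "P = m`E \<union> M`E"
  show ?case
  proof (cases "P \<inter> {b<..<a} = {}")
    case True
    show ?thesis
    proof (cases "b = a")
      case True
      then show ?thesis using c by (auto intro!: sum_nonneg simp: len_inter_def)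
    next
      case False
      with less.prems have ba: "b < a" by simp
      have "(\<Sum>e\<in>E. c e * len_inter b a (m e) (M e)) =
            (a - b) * (\<Sum>e\<in>E. if m e < a \<and> a \<le> M e then c e else 0)"
        unfolding sum_distrib_left
      proof (rule sum.cong)
        fix e assume e: "e \<in> E"
        have "m e \<notin> {b<..<a}" "M e \<notin> {b<..<a}" using True e by (auto simp: P_def)
        then show "c e * len_inter b a (m e) (M e) = (a - b) * (if m e < a \<and> a \<le> M e then c e else 0)"
          using len_inter_no_endpoint_inside[OF ba mM[rule_format, OF e]] by simp
      qed simp
      then show ?thesis using less.prems ba by (simp add: mult.commute)
    qed
  next
    case False
    then obtain x where x: "x \<in> P" "b < x" "x < a" by auto
    have "finite P" using fin by (simp add: P_def)
    then have "card (P \<inter> {b<..<x}) < card (P \<inter> {b<..<a})"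
      and "card (P \<inter> {x<..<a}) < card (P \<inter> {b<..<a})"
      using x by (auto intro!: psubset_card_mono)
    then have "K * (x - b) \<le> (\<Sum>e\<in>E. c e * len_inter b x (m e) (M e))"
      and "K * (a - x) \<le> (\<Sum>e\<in>E. c e * len_inter x a (m e) (M e))"
      using less.hyps[of b x] less.hyps[of x a] less.prems x by (auto simp: P_def)
    moreover have "(\<Sum>e\<in>E. c e * len_inter b a (m e) (M e)) =
        (\<Sum>e\<in>E. c e * len_inter b x (m e) (M e)) + (\<Sum>e\<in>E. c e * len_inter x a (m e) (M e))"
      unfolding sum.distrib[symmetric] distrib_left[symmetric]
      using x mM by (intro sum.cong refl arg_cong[where f="(*) _"] len_inter_split) auto
    moreover have "K * (a - b) = K * (x - b) + K * (a - x)" by (simp add: algebra_simps)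
    ultimately show ?thesis by linarith
  qed
qed

lemma weighted_Cauchy_Schwarz_sum:
  fixes c g :: "'e \<Rightarrow> real"
  assumes "\<forall>e\<in>A. 0 \<le> c e"
  shows "(\<Sum>e\<in>A. c e * g e)\<^sup>2 \<le> (\<Sum>e\<in>A. c e * (g e)\<^sup>2) * (\<Sum>e\<in>A. c e)"
proof -
  have "(\<Sum>e\<in>A. (sqrt (c e) * g e) * sqrt (c e))\<^sup>2
      \<le> (\<Sum>e\<in>A. (sqrt (c e) * g e)\<^sup>2) * (\<Sum>e\<in>A. (sqrt (c e))\<^sup>2)"
    by (rule Cauchy_Schwarz_ineq_sum)
  moreover have "\<And>e. e \<in> A \<Longrightarrow> sqrt (c e) * g e * sqrt (c e) = c e * g e"
    and "\<And>e. e \<in> A \<Longrightarrow> (sqrt (c e) * g e)\<^sup>2 = c e * (g e)\<^sup>2"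
    and "\<And>e. e \<in> A \<Longrightarrow> (sqrt (c e))\<^sup>2 = c e"
    using assms by (auto simp: power_mult_distrib)
  ultimately show ?thesis by (simp cong: sum.cong)
qed

lemma sq_div_le_of_split_cover:
  fixes p D L x y E :: real
  assumes "0 \<le> p" "0 \<le> D" "0 < p + D" "0 \<le> L" "0 \<le> y" "p * L \<le> x + y"
    and "x\<^sup>2 \<le> E * D" "0 \<le> E"
  shows "(p * L)\<^sup>2 / (p + D) \<le> E + L * y"
proof -
  have expand: "(E + L * y) * (p + D) = E * D + y * (p * L) + (E * p + L * y * D)"
    by (simp add: algebra_simps)
  have "(p * L)\<^sup>2 \<le> (E + L * y) * (p + D)"
  proof (cases "p * L \<le> y")
    case True
    then have "(p * L)\<^sup>2 \<le> y * (p * L)"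
      using assms by (simp add: power2_eq_square mult_right_mono)
    moreover have "0 \<le> E * D" "0 \<le> E * p + L * y * D"
      using assms by simp_all
    ultimately show ?thesis unfolding expand by linarith
  next
    case False
    define u where "u = p * L - y"
    define X where "X = E * p"
    define Y where "Y = L * y * D"
    have u: "0 < u" "u \<le> x" using False assms(6) by (auto simp: u_def)
    have "u\<^sup>2 \<le> x\<^sup>2" using u by (intro power_mono) auto
    with assms(7) have ED: "u\<^sup>2 \<le> E * D" by linarith
    \<comment> \<open>AM-GM on the cross terms: \<open>X Y = (E D) (p L y) \<ge> u\<^sup>2 y\<^sup>2\<close>\<close>
    have "(u * y)\<^sup>2 = u\<^sup>2 * (y * y)" by (simp add: power2_eq_square)
    also have "\<dots> \<le> u\<^sup>2 * (p * L * y)"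
      using False assms(5) by (intro mult_left_mono mult_right_mono) auto
    also have "\<dots> \<le> (E * D) * (p * L * y)"
      using ED assms by (intro mult_right_mono) auto
    also have "\<dots> = X * Y" by (simp add: X_def Y_def)
    finally have "(2 * (u * y))\<^sup>2 \<le> 4 * (X * Y)" by (simp add: power_mult_distrib)
    also have "\<dots> \<le> (X + Y)\<^sup>2"
    proof -
      have "(X + Y)\<^sup>2 = (X - Y)\<^sup>2 + 4 * (X * Y)" by (simp add: power2_eq_square algebra_simps)
      then show ?thesis using zero_le_power2[of "X - Y"] by linarith
    qed
    finally have "2 * (u * y) \<le> X + Y"
    proof (rule power2_le_imp_le)
      show "0 \<le> X + Y" unfolding X_def Y_def using assms by (intro add_nonneg_nonneg mult_nonneg_nonneg) auto
    qed
    moreover have "(p * L)\<^sup>2 = u\<^sup>2 + u * y + y * (p * L)"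
      by (simp add: u_def power2_eq_square algebra_simps)
    moreover have "0 \<le> u * y" using u assms(5) by simp
    ultimately show ?thesis unfolding expand X_def Y_def using ED by linarith
  qed
  then show ?thesis using assms(3) by (simp add: divide_le_eq)
qed

context
  fixes V :: "'a set" and w :: "'a \<Rightarrow> 'a \<Rightarrow> real"
  assumes G: "wgraph V w"
begin

lemma wgraph_finite: "finite V"
  using G by (simp add: wgraph_def)

lemma weight_nonneg: "0 \<le> w u v"
  using G by (simp add: wgraph_def)

lemma weight_sym: "w u v = w v u"
  using G by (simp add: wgraph_def)

lemma degw_nonneg: "0 \<le> degw V w v"
  unfolding degw_def by (intro sum_nonneg weight_nonneg)

lemma vol_nonneg: "0 \<le> vol V w S"
  unfolding vol_def by (intro sum_nonneg degw_nonneg)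

lemma vol_mono: "S \<subseteq> T \<Longrightarrow> T \<subseteq> V \<Longrightarrow> vol V w S \<le> vol V w T"
  unfolding vol_def using wgraph_finite
  by (intro sum_mono2 degw_nonneg) (auto intro: finite_subset)

lemma degw_le_vol: "v \<in> S \<Longrightarrow> S \<subseteq> V \<Longrightarrow> degw V w v \<le> vol V w S"
  unfolding vol_def using wgraph_finite
  by (intro member_le_sum degw_nonneg) (auto intro: finite_subset)

lemma vol_add_compl: "S \<subseteq> V \<Longrightarrow> vol V w S + vol V w (V - S) = vol V w V"
  unfolding vol_def using wgraph_finite by (metis sum.subset_diff add.commute)

lemma cut_nonneg: "0 \<le> cut V w S"
  unfolding cut_def by (intro sum_nonneg weight_nonneg)

lemma supp_ne_vertices_if_vol_supp_le_half:
  assumes "\<forall>v\<in>V. 1 \<le> degw V w v" "V \<noteq> {}" "vol V w (supp V f) \<le> vol V w V / 2"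
  shows "supp V f \<noteq> V"
proof
  assume "supp V f = V"
  obtain v where "v \<in> V" using assms(2) by auto
  then have "1 \<le> vol V w V" using assms(1) degw_le_vol[of v V] by fastforce
  with assms(3) \<open>supp V f = V\<close> show False by simp
qed

text \<open>Every edge crossing level \<open>t\<close> appears twice among the ordered pairs, hence the weight \<open>w u v / 2\<close>.\<close>
lemma cut_level_set_eq_crossing_sum:
  "cut V w (level_set V f t) =
     (\<Sum>(u, v)\<in>V \<times> V. if min (f u) (f v) < t \<and> t \<le> max (f u) (f v) then w u v / 2 else 0)"
proof -
  define S where "S = level_set V f t"
  have SV: "S \<subseteq> V" by (auto simp: S_def level_set_def)
  define g where "g u v = (if u \<in> S \<and> v \<notin> S then w u v else 0)" for u v
  have "(\<Sum>(u, v)\<in>V \<times> V. if min (f u) (f v) < t \<and> t \<le> max (f u) (f v) then w u v / 2 else 0)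
      = (\<Sum>u\<in>V. \<Sum>v\<in>V. g u v / 2 + g v u / 2)"
    unfolding sum.cartesian_product[symmetric]
    by (intro sum.cong refl) (auto simp: g_def S_def level_set_def min_def max_def weight_sym)
  also have "\<dots> = (\<Sum>u\<in>V. \<Sum>v\<in>V. g u v) / 2 + (\<Sum>u\<in>V. \<Sum>v\<in>V. g v u) / 2"
    by (simp add: sum.distrib sum_divide_distrib)
  also have "(\<Sum>u\<in>V. \<Sum>v\<in>V. g v u) = (\<Sum>u\<in>V. \<Sum>v\<in>V. g u v)"
    by (rule sum.swap)
  also have "(\<Sum>u\<in>V. \<Sum>v\<in>V. g u v) = (\<Sum>u\<in>V. if u \<in> S then \<Sum>v\<in>V \<inter> -S. w u v else 0)"
    by (intro sum.cong refl) (simp add: g_def sum.inter_restrict[OF wgraph_finite])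
  also have "\<dots> = (\<Sum>u\<in>S. \<Sum>v\<in>V - S. w u v)"
    using SV by (simp add: sum.inter_restrict[OF wgraph_finite, symmetric] Int_absorb1 Diff_eq)
  finally show ?thesis by (simp add: cut_def S_def)
qed

lemma finite_level_set_conductances:
  "finite {conductance V w (level_set V f t) | t. level_set V f t \<noteq> {} \<and> level_set V f t \<noteq> V}"
  by (rule finite_subset[of _ "conductance V w ` Pow V"])
     (auto simp: level_set_def wgraph_finite)

lemma phi_fun_le_conductance:
  assumes "level_set V f t \<noteq> {}" "level_set V f t \<noteq> V"
  shows "phi_fun V w f \<le> conductance V w (level_set V f t)"
  unfolding phi_fun_def using assms by (intro Min_le finite_level_set_conductances) auto

lemma phi_fun_nonneg:
  assumes "level_set V f t \<noteq> {}" "level_set V f t \<noteq> V"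
  shows "0 \<le> phi_fun V w f"
  unfolding phi_fun_def using assms
  by (subst Min_ge_iff[OF finite_level_set_conductances])
     (auto simp: conductance_def cut_nonneg vol_nonneg)

lemma phi_fun_mult_vol_le_cut:
  assumes "level_set V f t \<noteq> V" "vol V w (level_set V f t) \<le> vol V w V / 2"
  shows "phi_fun V w f * vol V w (level_set V f t) \<le> cut V w (level_set V f t)"
proof (cases "vol V w (level_set V f t) = 0")
  case True
  then show ?thesis by (simp add: cut_nonneg)
next
  case False
  define S where "S = level_set V f t"
  have "S \<subseteq> V" by (auto simp: S_def level_set_def)
  then have "min (vol V w S) (vol V w (V - S)) = vol V w S"
    using assms(2) vol_add_compl[of S] by (simp add: S_def)
  moreover have "S \<noteq> {}" "0 < vol V w S"
    using False vol_nonneg[of S] by (auto simp: S_def vol_def)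
  ultimately show ?thesis
    using phi_fun_le_conductance[of f t] assms(1)
    by (simp add: S_def conductance_def le_divide_eq)
qed

lemma sum_touching_weight_le_vol_int:
  "(\<Sum>(u, v)\<in>V \<times> V. if f u \<in> J \<or> f v \<in> J then w u v / 2 else 0) \<le> vol_int V w f J"
proof -
  define D where "D = vol_int V w f J"
  have D: "D = (\<Sum>u\<in>V. if f u \<in> J then degw V w u else 0)"
    unfolding D_def vol_int_def vol_def by (simp add: sum.inter_filter wgraph_finite)
  have degw_row: "degw V w u = (\<Sum>v\<in>V. w u v)" for u
    unfolding degw_def by (intro sum.cong refl weight_sym)
  have row: "(\<Sum>v\<in>V. if f u \<in> J then w u v / 2 else 0) = (if f u \<in> J then degw V w u else 0) / 2"
    for u
    by (cases "f u \<in> J") (simp_all only: if_True if_False degw_row sum_divide_distrib, simp)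
  have column: "(\<Sum>u\<in>V. if f v \<in> J then w u v / 2 else 0) = (if f v \<in> J then degw V w v else 0) / 2"
    for v
    by (cases "f v \<in> J") (simp_all only: if_True if_False degw_def sum_divide_distrib, simp)
  have half_left: "(\<Sum>u\<in>V. \<Sum>v\<in>V. if f u \<in> J then w u v / 2 else 0) = D / 2"
    by (simp only: row D sum_divide_distrib)
  have half_right: "(\<Sum>u\<in>V. \<Sum>v\<in>V. if f v \<in> J then w u v / 2 else 0) = D / 2"
    by (subst sum.swap) (simp only: column D sum_divide_distrib)
  have "(\<Sum>(u, v)\<in>V \<times> V. if f u \<in> J \<or> f v \<in> J then w u v / 2 else 0)
      \<le> (\<Sum>(u, v)\<in>V \<times> V. (if f u \<in> J then w u v / 2 else 0) + (if f v \<in> J then w u v / 2 else 0))"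
    by (intro sum_mono) (auto simp: weight_nonneg)
  also have "\<dots> = D"
    by (simp add: sum.cartesian_product[symmetric] sum.distrib half_left half_right)
  finally show ?thesis by (simp add: D_def)
qed

end

definition interval_variation :: "'a set \<Rightarrow> ('a \<Rightarrow> 'a \<Rightarrow> real) \<Rightarrow> ('a \<Rightarrow> real) \<Rightarrow> real \<Rightarrow> real \<Rightarrow> real" where
  "interval_variation V w f b a = (1/2) * (\<Sum>u\<in>V. \<Sum>v\<in>V. w u v *
       len_inter b a (min (f u) (f v)) (max (f u) (f v)))"

lemma energy_ge_of_interval_variation_ge:
  assumes G: "wgraph V w" and ba: "b < a" and K: "0 \<le> K" "0 < K + vol_int V w f {b<..a}"
    and var: "K * (a - b) \<le> interval_variation V w f b a"
  shows "(K * (a - b))\<^sup>2 / (K + vol_int V w f {b<..a}) \<le> energy V w f b a"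
proof -
  define l where "l p = len_inter b a (min (f (fst p)) (f (snd p))) (max (f (fst p)) (f (snd p)))"
    for p :: "'a \<times> 'a"
  define touch where "touch p \<longleftrightarrow> f (fst p) \<in> {b<..a} \<or> f (snd p) \<in> {b<..a}" for p :: "'a \<times> 'a"
  define c where "c p = (if touch p then w (fst p) (snd p) / 2 else 0)" for p
  define d where "d p = (if touch p then 0 else w (fst p) (snd p) / 2)" for p
  define x where "x = (\<Sum>p\<in>V \<times> V. c p * l p)"
  define y where "y = (\<Sum>p\<in>V \<times> V. d p * l p)"
  define E where "E = (\<Sum>p\<in>V \<times> V. c p * (l p)\<^sup>2)"
  have c_nonneg: "0 \<le> c p" and d_nonneg: "0 \<le> d p" for p
    using weight_nonneg[OF G] by (auto simp: c_def d_def)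
  have split_weight: "c p + d p = w (fst p) (snd p) / 2" for p
    by (simp add: c_def d_def)
  have pair_sum: "(1/2) * (\<Sum>u\<in>V. \<Sum>v\<in>V. w u v * h (u, v)) = (\<Sum>p\<in>V \<times> V. (c p + d p) * h p)"
    for h :: "'a \<times> 'a \<Rightarrow> real"
    by (simp add: split_weight sum.cartesian_product sum_distrib_left case_prod_unfold)
  \<comment> \<open>an edge with no endpoint in \<open>(b, a]\<close> meets it in nothing or in all of it\<close>
  have jump: "d p * (l p)\<^sup>2 = (a - b) * (d p * l p)" for p
    using len_inter_sq_no_endpoint_inside[OF ba, of "min (f (fst p)) (f (snd p))" "max (f (fst p)) (f (snd p))"]
    by (auto simp: d_def l_def touch_def min_def max_def)
  have "energy V w f b a = (\<Sum>p\<in>V \<times> V. (c p + d p) * (l p)\<^sup>2)"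
    using pair_sum[of "\<lambda>p. (l p)\<^sup>2"] by (simp add: energy_def l_def)
  also have "\<dots> = E + (a - b) * y"
    by (simp add: E_def y_def distrib_right sum.distrib jump sum_distrib_left)
  finally have energy: "energy V w f b a = E + (a - b) * y" .
  have "interval_variation V w f b a = x + y"
    using pair_sum[of l] by (simp add: interval_variation_def l_def x_def y_def distrib_right sum.distrib)
  with var have cover: "K * (a - b) \<le> x + y" by simp
  have "x\<^sup>2 \<le> E * (\<Sum>p\<in>V \<times> V. c p)"
    unfolding x_def E_def using c_nonneg by (intro weighted_Cauchy_Schwarz_sum) auto
  also have "\<dots> \<le> E * vol_int V w f {b<..a}"
  proof (intro mult_left_mono)
    show "(\<Sum>p\<in>V \<times> V. c p) \<le> vol_int V w f {b<..a}"
      using sum_touching_weight_le_vol_int[OF G, of f "{b<..a}"]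
      by (simp add: c_def touch_def case_prod_unfold)
    show "0 \<le> E" unfolding E_def using c_nonneg by (intro sum_nonneg) simp
  qed
  finally have "x\<^sup>2 \<le> E * vol_int V w f {b<..a}" .
  moreover have "0 \<le> E" "0 \<le> y"
    unfolding E_def y_def using c_nonneg d_nonneg len_inter_nonneg
    by (auto intro!: sum_nonneg simp: l_def)
  moreover have "0 \<le> vol_int V w f {b<..a}"
    unfolding vol_int_def by (rule vol_nonneg[OF G])
  ultimately show ?thesis
    using sq_div_le_of_split_cover[OF K(1) _ K(2), of "a - b" y x E] ba cover
    by (simp add: energy)
qed

lemma vol_ge_eq_vol_level_set: "vol_ge V w f a = vol V w (level_set V f a)"
  by (simp add: vol_ge_def level_set_def)

lemma level_set_subset_supp: "0 < t \<Longrightarrow> level_set V f t \<subseteq> supp V f"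
  by (auto simp: level_set_def supp_def)

lemma level_set_ne_vertices: "supp V f \<noteq> V \<Longrightarrow> 0 < t \<Longrightarrow> level_set V f t \<noteq> V"
  using level_set_subset_supp[of t V f] by (auto simp: supp_def)

lemma phi_fun_mult_vol_ge_nonneg:
  assumes G: "wgraph V w" and "supp V f \<noteq> V" "0 < a"
  shows "0 \<le> phi_fun V w f * vol_ge V w f a"
proof (cases "level_set V f a = {}")
  case True
  then show ?thesis by (simp add: vol_ge_eq_vol_level_set vol_def)
next
  case False
  then have "0 \<le> phi_fun V w f"
    using phi_fun_nonneg[OF G] level_set_ne_vertices[OF assms(2,3)] by blast
  then show ?thesis
    using vol_nonneg[OF G] by (simp add: vol_ge_eq_vol_level_set)
qed

lemma phi_fun_mult_vol_ge_le_cut: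
  assumes G: "wgraph V w" and supp: "supp V f \<noteq> V" "vol V w (supp V f) \<le> vol V w V / 2"
    and t: "0 < t" "t \<le> a"
  shows "phi_fun V w f * vol_ge V w f a \<le> cut V w (level_set V f t)"
proof (cases "level_set V f a = {}")
  case True
  then show ?thesis by (simp add: vol_ge_eq_vol_level_set vol_def cut_nonneg[OF G])
next
  case False
  define S where "S = level_set V f t"
  have Sa: "level_set V f a \<subseteq> S" using t by (auto simp: S_def level_set_def)
  have S_supp: "S \<subseteq> supp V f" using level_set_subset_supp[OF t(1)] by (simp add: S_def)
  have S_ne: "S \<noteq> {}" "S \<noteq> V"
    using False Sa level_set_ne_vertices[OF supp(1) t(1)] by (auto simp: S_def)
  have "vol V w S \<le> vol V w (supp V f)"
    using vol_mono[OF G S_supp] by (simp add: supp_def)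
  with supp(2) have S_half: "vol V w S \<le> vol V w V / 2" by simp
  have "phi_fun V w f * vol_ge V w f a \<le> phi_fun V w f * vol V w S"
    using Sa phi_fun_nonneg[OF G] S_ne vol_mono[OF G Sa]
    by (intro mult_left_mono) (auto simp: S_def vol_ge_eq_vol_level_set level_set_def)
  also have "\<dots> \<le> cut V w S"
    using phi_fun_mult_vol_le_cut[OF G] S_ne S_half by (simp add: S_def)
  finally show ?thesis by (simp add: S_def)
qed

lemma interval_variation_ge:
  assumes G: "wgraph V w" and supp: "supp V f \<noteq> V" "vol V w (supp V f) \<le> vol V w V / 2"
    and ba: "0 \<le> b" "b \<le> a"
  shows "phi_fun V w f * vol_ge V w f a * (a - b) \<le> interval_variation V w f b a"
proof -
  have "phi_fun V w f * vol_ge V w f a * (a - b)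
      \<le> (\<Sum>p\<in>V \<times> V. w (fst p) (snd p) / 2 *
          len_inter b a (min (f (fst p)) (f (snd p))) (max (f (fst p)) (f (snd p))))"
  proof (rule coarea_lower_bound)
    show "finite (V \<times> V)" using wgraph_finite[OF G] by simp
    show "\<forall>t\<in>{b<..a}. phi_fun V w f * vol_ge V w f a \<le>
        (\<Sum>p\<in>V \<times> V. if min (f (fst p)) (f (snd p)) < t \<and> t \<le> max (f (fst p)) (f (snd p))
          then w (fst p) (snd p) / 2 else 0)"
      using phi_fun_mult_vol_ge_le_cut[OF G supp] cut_level_set_eq_crossing_sum[OF G] ba
      by (auto simp: case_prod_unfold)
  qed (use ba weight_nonneg[OF G] in auto)
  then show ?thesis
    by (simp add: interval_variation_def sum.cartesian_product sum_distrib_left case_prod_unfold)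
qed

theorem mainTheorem6:
  fixes V :: "'a set" and w :: "'a \<Rightarrow> 'a \<Rightarrow> real" and f :: "'a \<Rightarrow> real"
    and a b :: real
  assumes "wgraph V w"
    and "\<forall>v\<in>V. degw V w v \<ge> 1"
    and "\<forall>v\<in>V. f v \<ge> 0"
    and "\<exists>v\<in>V. f v \<noteq> 0"
    and "vol V w (supp V f) \<le> vol V w V / 2"
    and "a > b" and "b \<ge> 0"
    and "phi_fun V w f * vol_ge V w f a + vol_int V w f {b<..a} > 0"
  shows "energy V w f b a \<ge>
    (phi_fun V w f)\<^sup>2 * (vol_ge V w f a)\<^sup>2 * (a - b)\<^sup>2 /
      (phi_fun V w f * vol_ge V w f a + vol_int V w f {b<..a})"
proof -
  have supp: "supp V f \<noteq> V"
    using assms(2,4,5) by (intro supp_ne_vertices_if_vol_supp_le_half[OF assms(1)]) auto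
  have "0 \<le> phi_fun V w f * vol_ge V w f a"
    using assms(6,7) by (intro phi_fun_mult_vol_ge_nonneg[OF assms(1) supp]) simp
  moreover have "phi_fun V w f * vol_ge V w f a * (a - b) \<le> interval_variation V w f b a"
    using assms(6,7) by (intro interval_variation_ge[OF assms(1) supp assms(5)]) simp_all
  ultimately have "(phi_fun V w f * vol_ge V w f a * (a - b))\<^sup>2
      / (phi_fun V w f * vol_ge V w f a + vol_int V w f {b<..a}) \<le> energy V w f b a"
    using assms(6,8) by (intro energy_ge_of_interval_variation_ge[OF assms(1)])
  then show ?thesis by (simp add: power_mult_distrib)
qed

end
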